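(* Let $A \in \mathbb{R}^{m \times n}$ and $b \in \mathbb{R}^m$ be such that $\mathcal{P} = \{x \in \mathbb{R}^n : Ax \geq b\}$ is a polytope. Let $G$ be a finite undirected graph whose vertices are pairs $u = (I, X)$ with $I \subset [m]$ and $X \in \mathbb{R}^{n \times (1+m)}$. Suppose that $G$ is nonempty and that for every vertex $u = (I,X)$ of $G$: (i) $\#I = n$; (ii) $A_I X = \tilde b_I$; (iii) $A X \geq_{\mathrm{lex}} \tilde b$; (iv) $u$ has exactly $n$ neighbors in $G$; (v) for every neighbor $u' = (I', X')$ of $u$ in $G$, $\#(I \cap I') = n-1$. Then the map $(I,X) \mapsto I$ is a graph isomorphism from $G$ onto the lex-graph $G_\mathrm{lex}$ of $(A,b)$.
   Context: Let $\tilde b := [\,b \;\; -\mathrm{Id}_m\,] \in \mathbb{R}^{m \times (1+m)}$. For row vectors $\alpha,\beta \in \mathbb{R}^{1+m}$, $\alpha \leq_{\mathrm{lex}} \beta$ means $\alpha = \beta$ or $\alpha_k < \beta_k$ at the first index $k$ where they differ; for matrices with $1+m$ columns, $X \geq_{\mathrm{lex}} Y$ means $X_i \geq_{\mathrm{lex}} Y_i$ for every row $i$. For $I \subset [m]$, $A_I$, $\tilde b_I$ are the submatrices of rows indexed by $I$. A lex-feasible basis is a set $I \subset [m]$ with $\#I = n$, $A_I$ nonsingular, and $X^I := A_I^{-1}\tilde b_I$ satisfying $A X^I \geq_{\mathrm{lex}} \tilde b$. The lex-graph $G_\mathrm{lex}$ has the lex-feasible bases as vertices, with an edge between $I$ and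 $I'$ iff $\#(I \cap I') = n-1$. *)

theory Defs
  imports "Jordan_Normal_Form.DL_Submatrix" "Jordan_Normal_Form.Determinant"
begin

text \<open>Matrices are Jordan_Normal_Form matrices; rows/columns are indexed from 0.
  A is m x n, b has length m, row indices [m] = {0..<m}.\<close>

text \<open>btilde = [b | -Id_m], an m x (1+m) matrix (column 0 is b).\<close>
definition btilde :: "real vec \<Rightarrow> real mat" where
  "btilde b = mat (dim_vec b) (1 + dim_vec b)
     (\<lambda>(i,k). if k = 0 then b $ i else if k = i + 1 then -1 else 0)"

definition lex_le :: "real vec \<Rightarrow> real vec \<Rightarrow> bool" where
  "lex_le \<alpha> \<beta> \<longleftrightarrow> \<alpha> = \<beta> \<or>
     (\<exists>k < dim_vec \<alpha>. (\<forall>j<k. \<alpha> $ j = \<beta> $ j) \<and> \<alpha> $ k < \<beta> $ k)"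

definition mat_lex_ge :: "real mat \<Rightarrow> real mat \<Rightarrow> bool" where
  "mat_lex_ge X Y \<longleftrightarrow> (\<forall>i < dim_row X. lex_le (row Y i) (row X i))"

definition rows_sub :: "'a mat \<Rightarrow> nat set \<Rightarrow> 'a mat" where
  "rows_sub M I = submatrix M I {..<dim_col M}"

text \<open>X^I := A_I^{-1} btilde_I, i.e. the unique n x (1+m) matrix X with A_I X = btilde_I.\<close>
definition basis_sol :: "real mat \<Rightarrow> real vec \<Rightarrow> nat set \<Rightarrow> real mat" where
  "basis_sol A b I = (THE X. X \<in> carrier_mat (dim_col A) (1 + dim_vec b) \<and>
       rows_sub A I * X = rows_sub (btilde b) I)"

definition lex_feasible_basis :: "real mat \<Rightarrow> real vec \<Rightarrow> nat set \<Rightarrow> bool" where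
  "lex_feasible_basis A b I \<longleftrightarrow>
     I \<subseteq> {..<dim_row A} \<and> card I = dim_col A \<and>
     det (rows_sub A I) \<noteq> 0 \<and>
     mat_lex_ge (A * basis_sol A b I) (btilde b)"

definition lex_vertices :: "real mat \<Rightarrow> real vec \<Rightarrow> nat set set" where
  "lex_vertices A b = {I. lex_feasible_basis A b I}"

definition lex_edges :: "real mat \<Rightarrow> real vec \<Rightarrow> (nat set \<times> nat set) set" where
  "lex_edges A b = {(I, I'). I \<in> lex_vertices A b \<and> I' \<in> lex_vertices A b \<and>
      int (card (I \<inter> I')) = int (dim_col A) - 1}"

definition polyhedron :: "real mat \<Rightarrow> real vec \<Rightarrow> real vec set" where
  "polyhedron A b = {x \<in> carrier_vec (dim_col A). \<forall>i < dim_row A. (A *\<^sub>v x) $ i \<ge> b $ i}"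

text \<open>A polyhedron is a polytope iff it is bounded.\<close>
definition is_polytope :: "real vec set \<Rightarrow> bool" where
  "is_polytope P \<longleftrightarrow> (\<exists>M. \<forall>x \<in> P. \<forall>j < dim_vec x. \<bar>x $ j\<bar> \<le> M)"

definition fin_undirected_graph :: "'v set \<Rightarrow> ('v \<times> 'v) set \<Rightarrow> bool" where
  "fin_undirected_graph V E \<longleftrightarrow> finite V \<and> E \<subseteq> V \<times> V \<and> sym E \<and> irrefl E"

definition graph_iso :: "('v \<Rightarrow> 'w) \<Rightarrow> 'v set \<Rightarrow> ('v \<times> 'v) set \<Rightarrow> 'w set \<Rightarrow> ('w \<times> 'w) set \<Rightarrow> bool" where
  "graph_iso f V E W F \<longleftrightarrow> bij_betw f V W \<and>
     (\<forall>u \<in> V. \<forall>v \<in> V. (u, v) \<in> E \<longleftrightarrow> (f u, f v) \<in> F)"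

end

theory Submission
  imports Defs
begin

text \<open>
  Column 0 of X^I is the vertex of the basis I and the other columns encode the edges leaving it.
  Lex-feasibility makes the system lexicographically nondegenerate: when a constraint i leaves a
  lex-feasible basis, the lexicographic ratio test determines the only constraint that can enter,
  so every vertex of G_lex has at most n neighbours.  In G the matrix X is determined by I, so
  (I, X) \<mapsto> I is injective; it maps the n neighbours of a vertex of G into its at most n
  lex-neighbours, hence onto them, and the image of G is closed under adjacency in G_lex.  It
  remains that G_lex is connected: for a fixed lex-feasible basis J, the lexicographic objective
  \<Sum>_{j \<in> J} A_j X^I is minimised only at I = J, and at any other I the boundedness of the
  polytope provides a pivot that strictly decreases it.
\<close>

section \<open>Lexicographic sign of a real sequence\<close>

definition lex_pos :: "nat \<Rightarrow> (nat \<Rightarrow> real) \<Rightarrow> bool" where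
  "lex_pos N f \<longleftrightarrow> (\<exists>k<N. (\<forall>j<k. f j = 0) \<and> f k > 0)"

definition lex_nonneg :: "nat \<Rightarrow> (nat \<Rightarrow> real) \<Rightarrow> bool" where
  "lex_nonneg N f \<longleftrightarrow> (\<forall>j<N. f j = 0) \<or> lex_pos N f"

lemma lex_pos_imp_lex_nonneg: "lex_pos N f \<Longrightarrow> lex_nonneg N f"
  unfolding lex_nonneg_def by simp

lemma lex_nonneg_cong: "lex_nonneg N f \<Longrightarrow> (\<And>c. c < N \<Longrightarrow> f c = g c) \<Longrightarrow> lex_nonneg N g"
  unfolding lex_nonneg_def lex_pos_def by (metis order.strict_trans)

lemma lex_pos_cong: "lex_pos N f \<Longrightarrow> (\<And>c. c < N \<Longrightarrow> f c = g c) \<Longrightarrow> lex_pos N g"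
  unfolding lex_pos_def by (metis order.strict_trans)

lemma lex_pos_add_nonneg:
  assumes "lex_pos N f" "lex_nonneg N g"
  shows "lex_pos N (\<lambda>c. f c + g c)"
proof -
  obtain k where k: "k < N" "\<forall>j<k. f j = 0" "f k > 0"
    using assms(1) unfolding lex_pos_def by blast
  show ?thesis
  proof (cases "\<forall>j<N. g j = 0")
    case True
    then show ?thesis using k unfolding lex_pos_def by (intro exI[of _ k]) auto
  next
    case False
    then obtain k' where k': "k' < N" "\<forall>j<k'. g j = 0" "g k' > 0"
      using assms(2) unfolding lex_nonneg_def lex_pos_def by blast
    show ?thesis unfolding lex_pos_def
    proof (intro exI[of _ "min k k'"] conjI allI impI)
      show "min k k' < N" using k k' by simp
      show "f j + g j = 0" if "j < min k k'" for j using that k k' by simp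
      show "f (min k k') + g (min k k') > 0"
        using k k' by (cases "k < k'"; cases "k = k'"; simp add: min_def add_pos_nonneg add_nonneg_pos)
    qed
  qed
qed

lemma lex_nonneg_add:
  assumes "lex_nonneg N f" "lex_nonneg N g"
  shows "lex_nonneg N (\<lambda>c. f c + g c)"
proof (cases "lex_pos N f")
  case True
  then show ?thesis using lex_pos_add_nonneg assms(2) lex_pos_imp_lex_nonneg by blast
next
  case False
  then have "\<forall>j<N. f j = 0" using assms(1) unfolding lex_nonneg_def by simp
  then show ?thesis by (intro lex_nonneg_cong[OF assms(2)]) simp
qed

lemma lex_pos_mult: "lex_pos N f \<Longrightarrow> t > 0 \<Longrightarrow> lex_pos N (\<lambda>c. t * f c)"
  unfolding lex_pos_def by auto

lemma lex_nonneg_mult: "lex_nonneg N f \<Longrightarrow> t \<ge> 0 \<Longrightarrow> lex_nonneg N (\<lambda>c. t * f c)"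
  unfolding lex_nonneg_def using lex_pos_mult[of N f t] by (cases "t = 0") auto

lemma lex_nonneg_mult_iff:
  assumes "t > 0"
  shows "lex_nonneg N (\<lambda>c. t * f c) \<longleftrightarrow> lex_nonneg N f"
proof
  assume "lex_nonneg N (\<lambda>c. t * f c)"
  then have "lex_nonneg N (\<lambda>c. (1 / t) * (t * f c))" by (rule lex_nonneg_mult) (use assms in simp)
  then show "lex_nonneg N f" by (rule lex_nonneg_cong) (use assms in simp)
qed (use assms lex_nonneg_mult in simp)

lemma lex_nonneg_antisym:
  assumes "lex_nonneg N f" "lex_nonneg N (\<lambda>c. - f c)"
  shows "\<forall>j<N. f j = 0"
proof (rule ccontr)
  assume "\<not> ?thesis"
  then have "lex_pos N f" using assms(1) unfolding lex_nonneg_def by auto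
  then have "lex_pos N (\<lambda>c. f c + - f c)" using lex_pos_add_nonneg assms(2) by blast
  then show False unfolding lex_pos_def by auto
qed

lemma lex_nonneg_total: "lex_nonneg N f \<or> lex_nonneg N (\<lambda>c. - f c)"
proof (cases "\<forall>j<N. f j = 0")
  case True
  then show ?thesis unfolding lex_nonneg_def by auto
next
  case False
  define k where "k = (LEAST k. k < N \<and> f k \<noteq> 0)"
  have k: "k < N" "f k \<noteq> 0"
    using False LeastI_ex[of "\<lambda>k. k < N \<and> f k \<noteq> 0"] unfolding k_def by auto
  have "\<forall>j<k. f j = 0"
  proof (intro allI impI)
    fix j assume "j < k"
    then have "\<not> (j < N \<and> f j \<noteq> 0)" unfolding k_def by (rule not_less_Least)
    then show "f j = 0" using \<open>j < k\<close> k(1) by simp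
  qed
  then show ?thesis using k unfolding lex_nonneg_def lex_pos_def
    by (cases "f k > 0") (auto intro!: exI[of _ k])
qed

lemma lex_nonneg_first: "lex_nonneg N f \<Longrightarrow> 0 < N \<Longrightarrow> f 0 \<ge> 0"
  unfolding lex_nonneg_def lex_pos_def by (metis less_eq_real_def not_gr0)

lemma lex_nonneg_sum:
  "finite S \<Longrightarrow> (\<And>s. s \<in> S \<Longrightarrow> lex_nonneg N (F s)) \<Longrightarrow> lex_nonneg N (\<lambda>c. \<Sum>s\<in>S. F s c)"
proof (induction S rule: finite_induct)
  case empty
  then show ?case unfolding lex_nonneg_def by simp
next
  case (insert x S)
  then have "lex_nonneg N (\<lambda>c. F x c + (\<Sum>s\<in>S. F s c))" using lex_nonneg_add by auto
  then show ?case using insert by simp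
qed

lemma lex_nonneg_sum_eq_0_imp:
  assumes "finite S" "\<And>s. s \<in> S \<Longrightarrow> lex_nonneg N (F s)"
    and "\<And>c. c < N \<Longrightarrow> (\<Sum>s\<in>S. F s c) = 0" and "s0 \<in> S"
  shows "\<forall>c<N. F s0 c = 0"
proof (rule ccontr)
  assume "\<not> ?thesis"
  then have "lex_pos N (F s0)" using assms(2,4) unfolding lex_nonneg_def by auto
  moreover have "lex_nonneg N (\<lambda>c. \<Sum>s\<in>S-{s0}. F s c)" using assms by (intro lex_nonneg_sum) auto
  ultimately have "lex_pos N (\<lambda>c. F s0 c + (\<Sum>s\<in>S-{s0}. F s c))" by (rule lex_pos_add_nonneg)
  moreover have "F s0 c + (\<Sum>s\<in>S-{s0}. F s c) = (\<Sum>s\<in>S. F s c)" for c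
    using assms(1,4) by (simp add: sum.remove)
  ultimately have "lex_pos N (\<lambda>c. \<Sum>s\<in>S. F s c)" by simp
  then show False using assms(3) unfolding lex_pos_def by auto
qed

lemma ex_lex_min:
  assumes "finite S" "S \<noteq> {}"
  shows "\<exists>j\<in>S. \<forall>k\<in>S. lex_nonneg N (\<lambda>c. f k c - f j c)"
  using assms
proof (induction S rule: finite_ne_induct)
  case (singleton x)
  then show ?case unfolding lex_nonneg_def by simp
next
  case (insert x S)
  then obtain j where j: "j \<in> S" "\<forall>k\<in>S. lex_nonneg N (\<lambda>c. f k c - f j c)" by blast
  show ?case
  proof (cases "lex_nonneg N (\<lambda>c. f x c - f j c)")
    case True
    then show ?thesis using j by auto
  next
    case False
    then have xj: "lex_nonneg N (\<lambda>c. f j c - f x c)"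
      using lex_nonneg_total[of N "\<lambda>c. f x c - f j c"] by simp
    have "lex_nonneg N (\<lambda>c. f k c - f x c)" if "k \<in> insert x S" for k
    proof (cases "k = x")
      case True
      then show ?thesis unfolding lex_nonneg_def by simp
    next
      case False
      then have "lex_nonneg N (\<lambda>c. f k c - f j c)" using that j by auto
      from lex_nonneg_add[OF this xj] show ?thesis by simp
    qed
    then show ?thesis by blast
  qed
qed

section \<open>Index sets\<close>

lemma pick_lessThan: "t < n \<Longrightarrow> pick {..<n} t = t"
proof (induction t)
  case 0
  then show ?case by (auto intro!: Least_equality)
next
  case (Suc t)
  then show ?case by (auto intro!: Least_equality)
qed

lemma bij_betw_pick:
  assumes fin: "finite I"
  shows "bij_betw (pick I) {..<card I} I"
proof (rule bij_betw_imageI)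
  show "inj_on (pick I) {..<card I}"
  proof (rule inj_onI)
    fix s t assume s: "s \<in> {..<card I}" and t: "t \<in> {..<card I}" and eq: "pick I s = pick I t"
    have "card {a\<in>I. a < pick I s} = s" using card_pick_le[of s I] s by (simp only: lessThan_iff)
    moreover have "card {a\<in>I. a < pick I t} = t" using card_pick_le[of t I] t by (simp only: lessThan_iff)
    ultimately show "s = t" using eq by metis
  qed
  show "pick I ` {..<card I} = I"
  proof
    show "pick I ` {..<card I} \<subseteq> I"
    proof
      fix x assume "x \<in> pick I ` {..<card I}"
      then obtain s where s: "s < card I" "x = pick I s" by auto
      then show "x \<in> I" using pick_in_set_le[OF s(1)] by (simp only:)
    qed
    show "I \<subseteq> pick I ` {..<card I}"
    proof
      fix i assume i: "i \<in> I"
      have "{a\<in>I. a < i} \<subset> I" using i by auto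
      then have "card {a\<in>I. a < i} < card I" by (rule psubset_card_mono[OF fin])
      then show "i \<in> pick I ` {..<card I}"
        by (intro image_eqI[where f = "pick I", OF pick_card_in_set[OF i, symmetric]])
          (simp only: lessThan_iff)
    qed
  qed
qed

lemma card_lessThan_Int: "I \<subseteq> {..<m} \<Longrightarrow> card {i. i < m \<and> i \<in> I} = card I"
proof -
  assume "I \<subseteq> {..<m}"
  then have "{i. i < m \<and> i \<in> I} = I" by auto
  then show ?thesis by simp
qed

lemma card_Int_pred_imp_exchange:
  fixes I I' :: "'a set"
  assumes fin: "finite I" "finite I'" and card: "card I' = card I"
    and card_Int: "int (card (I \<inter> I')) = int (card I) - 1"
  shows "\<exists>i j. I - I' = {i} \<and> I' - I = {j} \<and> I' = insert j (I - {i})"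
proof -
  have "card (I - I') = 1" using card_Diff_subset_Int[of I I'] fin card_Int by simp
  then obtain i where i: "I - I' = {i}" using card_1_singletonE by blast
  have "card (I' - I) = 1" using card_Diff_subset_Int[of I' I] fin card_Int card by (simp add: Int_commute)
  then obtain j where j: "I' - I = {j}" using card_1_singletonE by blast
  have "I' = (I \<inter> I') \<union> (I' - I)" by blast
  also have "I \<inter> I' = I - {i}" using i by blast
  finally show ?thesis using i j by auto
qed

section \<open>Bases of the system A x \<ge> b\<close>

locale lex_system =
  fixes A :: "real mat" and b :: "real vec" and m n :: nat
  assumes A: "A \<in> carrier_mat m n" and b: "b \<in> carrier_vec m"
begin

lemma dim_A [simp]: "dim_row A = m" "dim_col A = n"
  using A by auto

lemma dim_b [simp]: "dim_vec b = m"
  using b by auto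

text \<open>Matrices are handled entrywise: AX X k c and bt k c are the entries (A X)_{k,c} and
  (btilde b)_{k,c}, so slack X k is row k of A X - btilde b.\<close>
definition AX :: "real mat \<Rightarrow> nat \<Rightarrow> nat \<Rightarrow> real" where
  "AX X k c = (\<Sum>r<n. A $$ (k, r) * X $$ (r, c))"

definition bt :: "nat \<Rightarrow> nat \<Rightarrow> real" where
  "bt k c = (if c = 0 then b $ k else if c = Suc k then -1 else 0)"

definition slack :: "real mat \<Rightarrow> nat \<Rightarrow> nat \<Rightarrow> real" where
  "slack X k c = AX X k c - bt k c"

definition tight :: "nat set \<Rightarrow> real mat \<Rightarrow> bool" where
  "tight I X \<longleftrightarrow> (\<forall>k\<in>I. \<forall>c<Suc m. slack X k c = 0)"

definition lex_feasible :: "real mat \<Rightarrow> bool" where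
  "lex_feasible X \<longleftrightarrow> (\<forall>k<m. lex_nonneg (Suc m) (slack X k))"

definition tight_basis :: "nat set \<Rightarrow> real mat \<Rightarrow> bool" where
  "tight_basis I X \<longleftrightarrow> I \<subseteq> {..<m} \<and> card I = n \<and> X \<in> carrier_mat n (Suc m) \<and> tight I X"

definition lex_basis :: "nat set \<Rightarrow> real mat \<Rightarrow> bool" where
  "lex_basis I X \<longleftrightarrow> tight_basis I X \<and> lex_feasible X"

text \<open>Since column 1 + i of btilde b is -e_i, column 1 + i of -X^I is the i-th column of
  A_I^{-1} for i \<in> I: the direction of the edge along which constraint i is released.\<close>
definition edge_dir :: "real mat \<Rightarrow> nat \<Rightarrow> nat \<Rightarrow> real" where
  "edge_dir X i r = - X $$ (r, Suc i)"

definition Adot :: "nat \<Rightarrow> (nat \<Rightarrow> real) \<Rightarrow> real" where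
  "Adot k d = (\<Sum>r<n. A $$ (k, r) * d r)"

lemma tight_basisD:
  assumes "tight_basis I X"
  shows "I \<subseteq> {..<m}" "card I = n" "finite I" "X \<in> carrier_mat n (Suc m)" "tight I X"
  using assms finite_subset[of I "{..<m}"] unfolding tight_basis_def by auto

lemma lex_basis_slack: "lex_basis I X \<Longrightarrow> k < m \<Longrightarrow> lex_nonneg (Suc m) (slack X k)"
  unfolding lex_basis_def lex_feasible_def by simp

lemma btilde_index: "k < m \<Longrightarrow> c < Suc m \<Longrightarrow> btilde b $$ (k, c) = bt k c"
  unfolding btilde_def bt_def by simp

lemma dim_btilde [simp]: "dim_row (btilde b) = m" "dim_col (btilde b) = Suc m"
  unfolding btilde_def by simp_all

lemma index_mult_AX: "X \<in> carrier_mat n N \<Longrightarrow> k < m \<Longrightarrow> c < N \<Longrightarrow> (A * X) $$ (k, c) = AX X k c"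
  unfolding AX_def by (auto simp: scalar_prod_def atLeast0LessThan intro!: sum.cong)

lemma rows_sub_carrier:
  assumes "I \<subseteq> {..<m}"
  shows "rows_sub A I \<in> carrier_mat (card I) n"
    and "rows_sub (btilde b) I \<in> carrier_mat (card I) (Suc m)"
  using card_lessThan_Int[OF assms] unfolding rows_sub_def submatrix_def by auto

lemma rows_sub_index:
  assumes "I \<subseteq> {..<m}" and s: "s < card I"
  shows "t < n \<Longrightarrow> rows_sub A I $$ (s, t) = A $$ (pick I s, t)"
    and "t < Suc m \<Longrightarrow> rows_sub (btilde b) I $$ (s, t) = bt (pick I s) t"
proof -
  have "pick I s \<in> I" using pick_in_set_le[OF s] .
  then have "pick I s < m" using assms(1) by auto
  then show "t < n \<Longrightarrow> rows_sub A I $$ (s, t) = A $$ (pick I s, t)"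
    and "t < Suc m \<Longrightarrow> rows_sub (btilde b) I $$ (s, t) = bt (pick I s) t"
    using card_lessThan_Int[OF assms(1)] s pick_lessThan btilde_index
    unfolding rows_sub_def submatrix_def by auto
qed

lemma rows_sub_eq_iff_tight:
  assumes I: "I \<subseteq> {..<m}" and X: "X \<in> carrier_mat n (Suc m)"
  shows "rows_sub A I * X = rows_sub (btilde b) I \<longleftrightarrow> tight I X"
proof -
  have fin: "finite I" using I finite_subset by blast
  have entry: "(rows_sub A I * X) $$ (s, c) = rows_sub (btilde b) I $$ (s, c) \<longleftrightarrow>
      slack X (pick I s) c = 0" if "s < card I" "c < Suc m" for s c
    using that rows_sub_carrier[OF I] rows_sub_index[OF I] X
    by (auto simp: slack_def AX_def scalar_prod_def atLeast0LessThan intro!: sum.cong)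
  have "rows_sub A I * X = rows_sub (btilde b) I \<longleftrightarrow>
        (\<forall>s<card I. \<forall>c<Suc m. slack X (pick I s) c = 0)"
    using rows_sub_carrier[OF I] X entry by (auto simp: mat_eq_iff)
  also have "\<dots> \<longleftrightarrow> tight I X"
  proof
    assume zero: "\<forall>s<card I. \<forall>c<Suc m. slack X (pick I s) c = 0"
    have img: "pick I ` {..<card I} = I" using bij_betw_pick[OF fin] by (simp add: bij_betw_def)
    show "tight I X" unfolding tight_def
    proof (intro ballI allI impI)
      fix k c assume "k \<in> I" "c < Suc m"
      moreover obtain s where "s < card I" "k = pick I s" using img \<open>k \<in> I\<close> by force
      ultimately show "slack X k c = 0" using zero by simp
    qed
  qed (simp add: tight_def pick_in_set_le)
  finally show ?thesis .
qed

lemma mat_lex_ge_iff_lex_feasible: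
  assumes X: "X \<in> carrier_mat n (Suc m)"
  shows "mat_lex_ge (A * X) (btilde b) \<longleftrightarrow> lex_feasible X"
proof -
  have "lex_le (row (btilde b) k) (row (A * X) k) \<longleftrightarrow> lex_nonneg (Suc m) (slack X k)"
    if k: "k < m" for k
  proof -
    have entry: "row (A * X) k $ c - row (btilde b) k $ c = slack X k c" if "c < Suc m" for c
      using that k X btilde_index index_mult_AX[OF X] unfolding slack_def by simp
    have dim: "dim_vec (row (btilde b) k) = Suc m" "dim_vec (row (A * X) k) = Suc m"
      using X by auto
    show ?thesis
      unfolding lex_le_def lex_nonneg_def lex_pos_def vec_eq_iff dim
      using entry by (smt (verit, best) order.strict_trans)
  qed
  then show ?thesis unfolding mat_lex_ge_def lex_feasible_def using X by simp
qed

lemma Adot_edge_dir: "Adot k (edge_dir X i) = - AX X k (Suc i)"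
  unfolding Adot_def edge_dir_def AX_def by (simp add: sum_negf)

lemma tight_basis_AX: "tight_basis I X \<Longrightarrow> k \<in> I \<Longrightarrow> c < Suc m \<Longrightarrow> AX X k c = bt k c"
  unfolding tight_basis_def tight_def slack_def by auto

lemma tight_basis_slack: "tight_basis I X \<Longrightarrow> k \<in> I \<Longrightarrow> c < Suc m \<Longrightarrow> slack X k c = 0"
  unfolding tight_basis_def tight_def by simp

lemma tight_basis_Adot_edge_dir:
  assumes "tight_basis I X" "k \<in> I" "i \<in> I"
  shows "Adot k (edge_dir X i) = (if k = i then 1 else 0)"
proof -
  have "i < m" using assms tight_basisD(1) by auto
  then show ?thesis using tight_basis_AX[OF assms(1,2)] unfolding Adot_edge_dir bt_def by auto
qed

definition edge_dir_mat :: "nat set \<Rightarrow> real mat \<Rightarrow> real mat" where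
  "edge_dir_mat I X = mat n n (\<lambda>(r, t). edge_dir X (pick I t) r)"

lemma rows_sub_mult_edge_dir_mat:
  assumes tb: "tight_basis I X"
  shows "rows_sub A I * edge_dir_mat I X = 1\<^sub>m n"
proof (rule eq_matI)
  note I = tight_basisD[OF tb]
  fix s t assume "s < dim_row (1\<^sub>m n)" "t < dim_col (1\<^sub>m n)"
  then have s: "s < card I" and t: "t < card I" using I by auto
  have inj: "inj_on (pick I) {..<card I}" using bij_betw_pick[OF I(3)] by (rule bij_betw_imp_inj_on)
  have "(rows_sub A I * edge_dir_mat I X) $$ (s, t) = Adot (pick I s) (edge_dir X (pick I t))"
    using s t I rows_sub_carrier(1)[OF I(1)] rows_sub_index(1)[OF I(1) s]
    by (auto simp: Adot_def edge_dir_mat_def scalar_prod_def atLeast0LessThan intro!: sum.cong)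
  also have "\<dots> = (if s = t then 1 else 0)"
    using tight_basis_Adot_edge_dir[OF tb] pick_in_set_le s t inj_onD[OF inj, of s t] by auto
  finally show "(rows_sub A I * edge_dir_mat I X) $$ (s, t) = 1\<^sub>m n $$ (s, t)"
    using s t I by simp
qed (use tight_basisD[OF tb] rows_sub_carrier(1) in \<open>auto simp: edge_dir_mat_def\<close>)

lemma tight_basis_det_nonzero:
  assumes "tight_basis I X"
  shows "det (rows_sub A I) \<noteq> 0"
proof -
  have M: "rows_sub A I \<in> carrier_mat n n"
    using rows_sub_carrier(1)[OF tight_basisD(1)[OF assms]] tight_basisD(2)[OF assms] by simp
  have D: "edge_dir_mat I X \<in> carrier_mat n n" unfolding edge_dir_mat_def by simp
  have "det (rows_sub A I) * det (edge_dir_mat I X) = 1"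
    using det_mult[OF M D] rows_sub_mult_edge_dir_mat[OF assms] by simp
  then show ?thesis by auto
qed

lemma tight_basis_left_inverse:
  assumes tb: "tight_basis I X" and r: "r < n" "r' < n"
  shows "(\<Sum>i\<in>I. edge_dir X i r * A $$ (i, r')) = (if r = r' then 1 else 0)"
proof -
  note I = tight_basisD[OF tb]
  define M where "M = rows_sub A I"
  define D where "D = edge_dir_mat I X"
  have M: "M \<in> carrier_mat n n" using rows_sub_carrier(1)[OF I(1)] I unfolding M_def by simp
  have D: "D \<in> carrier_mat n n" unfolding D_def edge_dir_mat_def by simp
  have DM: "D * M = 1\<^sub>m n"
    using mat_mult_left_right_inverse[OF M D] rows_sub_mult_edge_dir_mat[OF tb]
    unfolding M_def D_def by simp
  have "(\<Sum>i\<in>I. edge_dir X i r * A $$ (i, r')) = (\<Sum>t<n. edge_dir X (pick I t) r * A $$ (pick I t, r'))"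
    using sum.reindex_bij_betw[OF bij_betw_pick[OF I(3)], of "\<lambda>i. edge_dir X i r * A $$ (i, r')"] I(2)
    by simp
  also have "\<dots> = (D * M) $$ (r, r')"
    using M D r rows_sub_index(1)[OF I(1)] I(2)
    by (auto simp: M_def D_def edge_dir_mat_def scalar_prod_def atLeast0LessThan intro!: sum.cong)
  finally show ?thesis using DM r by simp
qed

text \<open>Y = A_I^{-1} (A_I Y), with A_I^{-1} read off from X.\<close>
lemma tight_basis_expansion:
  assumes tb: "tight_basis I X" and Y: "Y \<in> carrier_mat n N" and r: "r < n" and c: "c < N"
  shows "Y $$ (r, c) = (\<Sum>i\<in>I. edge_dir X i r * AX Y i c)"
proof -
  have "(\<Sum>i\<in>I. edge_dir X i r * AX Y i c)
      = (\<Sum>r'<n. (\<Sum>i\<in>I. edge_dir X i r * A $$ (i, r')) * Y $$ (r', c))"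
    unfolding AX_def by (simp add: sum_distrib_left sum_distrib_right mult.assoc sum.swap[of _ I])
  also have "\<dots> = (\<Sum>r'<n. if r = r' then Y $$ (r', c) else 0)"
    using tight_basis_left_inverse[OF tb r] by (intro sum.cong) auto
  also have "\<dots> = Y $$ (r, c)" using r by simp
  finally show ?thesis by simp
qed

lemma tight_basis_mat_eqI:
  assumes tb: "tight_basis I X" and Y: "Y \<in> carrier_mat n N" and Z: "Z \<in> carrier_mat n N"
    and eq: "\<And>k c. k \<in> I \<Longrightarrow> c < N \<Longrightarrow> AX Y k c = AX Z k c"
  shows "Y = Z"
proof (rule eq_matI)
  fix r c assume "r < dim_row Z" "c < dim_col Z"
  then show "Y $$ (r, c) = Z $$ (r, c)"
    using tight_basis_expansion[OF tb Y] tight_basis_expansion[OF tb Z] eq Z by auto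
qed (use Y Z in auto)

lemma tight_basis_nonbasic_col:
  assumes tb: "tight_basis I X" and j: "j < m" "j \<notin> I"
  shows "AX X k (Suc j) = 0"
proof -
  note I = tight_basisD[OF tb]
  have "X $$ (r, Suc j) = 0" if "r < n" for r
  proof -
    have "X $$ (r, Suc j) = (\<Sum>i\<in>I. edge_dir X i r * AX X i (Suc j))"
      using tight_basis_expansion[OF tb I(4) that] j by simp
    also have "\<dots> = 0"
      using tight_basis_AX[OF tb] j unfolding bt_def by (intro sum.neutral) auto
    finally show ?thesis .
  qed
  then show ?thesis unfolding AX_def by simp
qed

lemma slack_nonbasic_col:
  assumes "tight_basis I X" "j < m" "j \<notin> I"
  shows "slack X k (Suc j) = (if k = j then 1 else 0)"
  unfolding slack_def tight_basis_nonbasic_col[OF assms] bt_def by simp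

lemma basis_sol_eq:
  assumes tb: "tight_basis I X"
  shows "basis_sol A b I = X"
  unfolding basis_sol_def
proof (rule the_equality)
  note I = tight_basisD[OF tb]
  show "X \<in> carrier_mat (dim_col A) (1 + dim_vec b) \<and> rows_sub A I * X = rows_sub (btilde b) I"
    using I rows_sub_eq_iff_tight by simp
  fix Y assume "Y \<in> carrier_mat (dim_col A) (1 + dim_vec b) \<and> rows_sub A I * Y = rows_sub (btilde b) I"
  then have Y: "Y \<in> carrier_mat n (Suc m)" and "tight I Y"
    using rows_sub_eq_iff_tight[OF I(1)] by auto
  then show "Y = X"
    using I unfolding tight_def slack_def by (intro tight_basis_mat_eqI[OF tb Y I(4)]) auto
qed

lemma lex_basis_imp_lex_feasible_basis:
  assumes "lex_basis I X"
  shows "lex_feasible_basis A b I"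
  using assms tight_basis_det_nonzero mat_lex_ge_iff_lex_feasible basis_sol_eq
  unfolding lex_basis_def lex_feasible_basis_def tight_basis_def by auto

lemma lex_feasible_basis_imp_lex_basis:
  assumes lf: "lex_feasible_basis A b I"
  shows "lex_basis I (basis_sol A b I)"
proof -
  have I: "I \<subseteq> {..<m}" "card I = n" and det: "det (rows_sub A I) \<noteq> 0"
    using lf unfolding lex_feasible_basis_def by auto
  have M: "rows_sub A I \<in> carrier_mat n n" using rows_sub_carrier(1)[OF I(1)] I(2) by simp
  obtain B where BM: "B * rows_sub A I = 1\<^sub>m n" and B: "B \<in> carrier_mat n n"
    using det_non_zero_imp_unit[OF M det] unfolding Units_def ring_mat_def by auto
  have MB: "rows_sub A I * B = 1\<^sub>m n" using mat_mult_left_right_inverse[OF B M BM] .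
  define X where "X = B * rows_sub (btilde b) I"
  have Bt: "rows_sub (btilde b) I \<in> carrier_mat n (Suc m)" using rows_sub_carrier(2)[OF I(1)] I(2) by simp
  have X: "X \<in> carrier_mat n (Suc m)" unfolding X_def using B Bt by simp
  have "rows_sub A I * X = rows_sub (btilde b) I"
    unfolding X_def using assoc_mult_mat[OF M B Bt, symmetric] MB Bt by simp
  then have tb: "tight_basis I X"
    using rows_sub_eq_iff_tight[OF I(1) X] I X unfolding tight_basis_def by simp
  show ?thesis
    using lf mat_lex_ge_iff_lex_feasible[OF X] tb
    unfolding basis_sol_eq[OF tb] lex_feasible_basis_def lex_basis_def by simp
qed

lemma lex_vertex_if_lex_feasible_solution:
  assumes "I \<subseteq> {..<m}" "card I = n" "X \<in> carrier_mat n (Suc m)"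
    and "rows_sub A I * X = rows_sub (btilde b) I" and "mat_lex_ge (A * X) (btilde b)"
  shows "I \<in> lex_vertices A b" and "basis_sol A b I = X"
proof -
  have "lex_basis I X"
    using assms rows_sub_eq_iff_tight mat_lex_ge_iff_lex_feasible
    unfolding lex_basis_def tight_basis_def by auto
  then show "I \<in> lex_vertices A b" "basis_sol A b I = X"
    using lex_basis_imp_lex_feasible_basis basis_sol_eq unfolding lex_basis_def lex_vertices_def by auto
qed

section \<open>Pivoting\<close>

definition pivot :: "real mat \<Rightarrow> (nat \<Rightarrow> real) \<Rightarrow> (nat \<Rightarrow> real) \<Rightarrow> real mat" where
  "pivot X d \<theta> = mat n (Suc m) (\<lambda>(r, c). X $$ (r, c) + d r * \<theta> c)"

text \<open>The lexicographic step length along d at which constraint j becomes tight.\<close>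
definition ratio :: "real mat \<Rightarrow> (nat \<Rightarrow> real) \<Rightarrow> nat \<Rightarrow> nat \<Rightarrow> real" where
  "ratio X d j c = slack X j c / - Adot j d"

lemma pivot_carrier: "pivot X d \<theta> \<in> carrier_mat n (Suc m)"
  unfolding pivot_def by simp

lemma pivot_cong: "(\<And>c. c < Suc m \<Longrightarrow> \<theta> c = \<theta>' c) \<Longrightarrow> pivot X d \<theta> = pivot X d \<theta>'"
  unfolding pivot_def by (rule eq_matI) auto

lemma slack_pivot: "c < Suc m \<Longrightarrow> slack (pivot X d \<theta>) k c = slack X k c + Adot k d * \<theta> c"
  unfolding slack_def AX_def Adot_def pivot_def
  by (simp add: algebra_simps sum.distrib sum_distrib_left)

lemma tight_basis_exchange_eq_pivot:
  assumes tb: "tight_basis I X" and i: "i \<in> I" and tb1: "tight_basis I1 X1" and sub: "I - {i} \<subseteq> I1"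
  shows "X1 = pivot X (edge_dir X i) (slack X1 i)"
proof (rule tight_basis_mat_eqI[OF tb tight_basisD(4)[OF tb1] pivot_carrier])
  fix k c assume k: "k \<in> I" and c: "c < Suc m"
  have "slack X1 k c = slack X k c + Adot k (edge_dir X i) * slack X1 i c"
  proof (cases "k = i")
    case True
    then show ?thesis using tight_basis_slack[OF tb k c] tight_basis_Adot_edge_dir[OF tb k i] by simp
  next
    case False
    then have "k \<in> I1" using k sub by auto
    then show ?thesis
      using tight_basis_slack[OF tb k c] tight_basis_slack[OF tb1 _ c] tight_basis_Adot_edge_dir[OF tb k i] False
      by simp
  qed
  then show "AX X1 k c = AX (pivot X (edge_dir X i) (slack X1 i)) k c"
    using slack_pivot[OF c] unfolding slack_def by simp
qed

text \<open>Lexicographic feasibility forces the entering constraint to be hit at the ratio step.\<close>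
lemma lex_basis_exchange_eq_pivot:
  assumes lb: "lex_basis I X" and i: "i \<in> I" and j: "j < m" "j \<notin> I"
    and lb1: "lex_basis (insert j (I - {i})) X1"
  shows "Adot j (edge_dir X i) < 0" and "X1 = pivot X (edge_dir X i) (ratio X (edge_dir X i) j)"
proof -
  define d where "d = edge_dir X i"
  define \<theta> where "\<theta> = slack X1 i"
  have tb: "tight_basis I X" and tb1: "tight_basis (insert j (I - {i})) X1"
    using lb lb1 unfolding lex_basis_def by auto
  have X1: "X1 = pivot X d \<theta>"
    unfolding d_def \<theta>_def by (rule tight_basis_exchange_eq_pivot[OF tb i tb1]) auto
  have "i < m" using i tight_basisD(1)[OF tb] by auto
  then have \<theta>_nonneg: "lex_nonneg (Suc m) \<theta>" unfolding \<theta>_def by (rule lex_basis_slack[OF lb1])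
  have \<theta>_eq: "Adot j d * \<theta> c = - slack X j c" if "c < Suc m" for c
    using tight_basis_slack[OF tb1 _ that, of j] slack_pivot[OF that, of X d \<theta> j] X1 by simp
  have neg: "Adot j d < 0"
  proof (rule ccontr)
    assume "\<not> Adot j d < 0"
    then have "lex_nonneg (Suc m) (\<lambda>c. Adot j d * \<theta> c)" using lex_nonneg_mult[OF \<theta>_nonneg] by simp
    then have "lex_nonneg (Suc m) (\<lambda>c. - slack X j c)" by (rule lex_nonneg_cong) (simp add: \<theta>_eq)
    then have "\<forall>c<Suc m. slack X j c = 0"
      using lex_nonneg_antisym lex_basis_slack[OF lb j(1)] by blast
    then show False using slack_nonbasic_col[OF tb j, of j] j(1) by auto
  qed
  then show "Adot j (edge_dir X i) < 0" unfolding d_def .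
  have "\<theta> c = ratio X d j c" if "c < Suc m" for c
    using \<theta>_eq[OF that] neg unfolding ratio_def by (simp add: field_simps)
  then show "X1 = pivot X (edge_dir X i) (ratio X (edge_dir X i) j)"
    unfolding X1 d_def[symmetric] by (rule pivot_cong)
qed

lemma lex_basis_entering_unique:
  assumes lb: "lex_basis I X" and i: "i \<in> I"
    and j: "j < m" "j \<notin> I" and lbj: "lex_basis (insert j (I - {i})) Xj"
    and k: "k < m" "k \<notin> I" and lbk: "lex_basis (insert k (I - {i})) Xk"
  shows "j = k"
proof (rule ccontr)
  assume "j \<noteq> k"
  define d where "d = edge_dir X i"
  have step: "lex_nonneg (Suc m) (\<lambda>c. ratio X d k' c - ratio X d j' c)"
    if k': "k' < m" and neg: "Adot k' d < 0"
      and lb': "lex_basis (insert j' (I - {i})) (pivot X d (ratio X d j'))" for j' k'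
  proof -
    have "Adot k' d \<noteq> 0" using neg by simp
    have "lex_nonneg (Suc m) (slack (pivot X d (ratio X d j')) k')" using lex_basis_slack[OF lb' k'] .
    then have "lex_nonneg (Suc m) (\<lambda>c. (- Adot k' d) * (ratio X d k' c - ratio X d j' c))"
      by (rule lex_nonneg_cong) (use \<open>Adot k' d \<noteq> 0\<close> in \<open>simp add: slack_pivot ratio_def field_simps\<close>)
    then show ?thesis using lex_nonneg_mult_iff[of "- Adot k' d"] neg by simp
  qed
  note negj = lex_basis_exchange_eq_pivot(1)[OF lb i j lbj, folded d_def]
  note negk = lex_basis_exchange_eq_pivot(1)[OF lb i k lbk, folded d_def]
  note Xj = lex_basis_exchange_eq_pivot(2)[OF lb i j lbj, folded d_def]
  note Xk = lex_basis_exchange_eq_pivot(2)[OF lb i k lbk, folded d_def]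
  have "lex_nonneg (Suc m) (\<lambda>c. - (ratio X d k c - ratio X d j c))"
    by (rule lex_nonneg_cong[OF step[OF j(1) negj lbk[unfolded Xk]]]) simp
  then have "\<forall>c<Suc m. ratio X d k c - ratio X d j c = 0"
    using lex_nonneg_antisym step[OF k(1) negk lbj[unfolded Xj]] by blast
  moreover have "ratio X d j (Suc j) \<noteq> 0" "ratio X d k (Suc j) = 0"
    using slack_nonbasic_col[OF conjunct1[OF lb[unfolded lex_basis_def]] j] negj \<open>j \<noteq> k\<close>
    unfolding ratio_def by auto
  ultimately show False using j(1) by auto
qed

lemma lex_edge_exchange:
  assumes "(I, I') \<in> lex_edges A b"
  obtains i j where "I - I' = {i}" "I' - I = {j}" "I' = insert j (I - {i})" "j < m"
proof -
  have lf: "lex_feasible_basis A b I" "lex_feasible_basis A b I'"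
    and card_Int: "int (card (I \<inter> I')) = int n - 1"
    using assms unfolding lex_edges_def lex_vertices_def by auto
  then have I: "card I = n" "finite I" and I': "I' \<subseteq> {..<m}" "card I' = card I" "finite I'"
    using finite_subset[of I "{..<m}"] finite_subset[of I' "{..<m}"] unfolding lex_feasible_basis_def by auto
  obtain i j where ij: "I - I' = {i}" "I' - I = {j}" "I' = insert j (I - {i})"
    using card_Int_pred_imp_exchange[OF I(2) I'(3) I'(2) card_Int[folded I(1)]] by blast
  moreover have "j < m" using ij(2) I'(1) by blast
  ultimately show ?thesis by (rule that)
qed

lemma card_lex_neighbours_le:
  assumes lf: "lex_feasible_basis A b I"
  shows "card {I'. (I, I') \<in> lex_edges A b} \<le> n"
proof -
  let ?N = "{I'. (I, I') \<in> lex_edges A b}"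
  have I: "card I = n" "finite I"
    using lf finite_subset[of I "{..<m}"] unfolding lex_feasible_basis_def by auto
  define leaving where "leaving I' = the_elem (I - I')" for I'
  have "inj_on leaving ?N"
  proof (rule inj_onI)
    fix I1 I2 assume I1: "I1 \<in> ?N" and I2: "I2 \<in> ?N" and eq: "leaving I1 = leaving I2"
    obtain i j where ij: "I - I1 = {i}" "I1 - I = {j}" "I1 = insert j (I - {i})" "j < m"
      using lex_edge_exchange I1 by blast
    obtain i' k where ik: "I - I2 = {i'}" "I2 - I = {k}" "I2 = insert k (I - {i'})" "k < m"
      using lex_edge_exchange I2 by blast
    have "i' = i" using eq ij(1) ik(1) unfolding leaving_def by simp
    have lb: "lex_basis I' (basis_sol A b I')" if "(I, I') \<in> lex_edges A b" for I'
      using that lex_feasible_basis_imp_lex_basis unfolding lex_edges_def lex_vertices_def by simp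
    have "i \<in> I" "j \<notin> I" "k \<notin> I" using ij(1,2) ik(2) by blast+
    have "j = k"
      by (rule lex_basis_entering_unique[OF lex_feasible_basis_imp_lex_basis[OF lf] \<open>i \<in> I\<close>
            ij(4) \<open>j \<notin> I\<close> lb[OF I1[simplified], unfolded ij(3)]
            ik(4) \<open>k \<notin> I\<close> lb[OF I2[simplified], unfolded ik(3) \<open>i' = i\<close>]])
    then show "I1 = I2" using ij(3) ik(3) \<open>i' = i\<close> by simp
  qed
  moreover have "leaving ` ?N \<subseteq> I"
  proof (rule image_subsetI)
    fix I' assume "I' \<in> ?N"
    then obtain i where "I - I' = {i}" using lex_edge_exchange by blast
    then show "leaving I' \<in> I" unfolding leaving_def by auto
  qed
  ultimately have "card ?N \<le> card I" using card_inj_on_le I(2) by blast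
  then show ?thesis using I(1) by simp
qed

section \<open>Connectivity of the lex-graph\<close>

text \<open>Column 0 of a lex-feasible X is a point of the polyhedron, and the ray from it along d
  stays inside.\<close>
lemma polytope_recession_trivial:
  assumes poly: "is_polytope (polyhedron A b)" and feas: "lex_feasible X"
    and nonneg: "\<And>k. k < m \<Longrightarrow> Adot k d \<ge> 0" and r: "r < n"
  shows "d r = 0"
proof (rule ccontr)
  assume dr: "d r \<noteq> 0"
  obtain M where M: "\<And>x j. x \<in> polyhedron A b \<Longrightarrow> j < dim_vec x \<Longrightarrow> \<bar>x $ j\<bar> \<le> M"
    using poly unfolding is_polytope_def by blast
  define x where "x t = vec n (\<lambda>r. X $$ (r, 0) + t * d r)" for t
  have x_in: "x t \<in> polyhedron A b" if t: "t \<ge> 0" for t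
    unfolding polyhedron_def
  proof (intro CollectI conjI allI impI)
    show "x t \<in> carrier_vec (dim_col A)" unfolding x_def by simp
    fix k assume "k < dim_row A"
    then have k: "k < m" by simp
    have "(A *\<^sub>v x t) $ k = AX X k 0 + t * Adot k d"
      using k unfolding x_def AX_def Adot_def
      by (simp add: scalar_prod_def atLeast0LessThan algebra_simps sum.distrib sum_distrib_left)
    moreover have "slack X k 0 \<ge> 0"
      using feas k lex_nonneg_first unfolding lex_feasible_def by blast
    moreover have "t * Adot k d \<ge> 0" using t nonneg[OF k] by simp
    ultimately show "b $ k \<le> (A *\<^sub>v x t) $ k" unfolding slack_def bt_def by simp
  qed
  define t where "t = (\<bar>M\<bar> + \<bar>X $$ (r, 0)\<bar> + 1) / \<bar>d r\<bar>"
  have "t \<ge> 0" unfolding t_def by simp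
  then have "\<bar>X $$ (r, 0) + t * d r\<bar> \<le> M" using M[OF x_in, of t r] r unfolding x_def by simp
  moreover have "\<bar>t * d r\<bar> = \<bar>M\<bar> + \<bar>X $$ (r, 0)\<bar> + 1" unfolding t_def using dr by (simp add: abs_mult)
  ultimately show False by linarith
qed

lemma AX_expansion:
  assumes tb: "tight_basis I X" and Y: "Y \<in> carrier_mat n N" and c: "c < N"
  shows "AX Y k c = (\<Sum>i\<in>I. Adot k (edge_dir X i) * AX Y i c)"
proof -
  have "AX Y k c = (\<Sum>r<n. A $$ (k, r) * (\<Sum>i\<in>I. edge_dir X i r * AX Y i c))"
    unfolding AX_def[of Y k c] using tight_basis_expansion[OF tb Y _ c] by simp
  also have "\<dots> = (\<Sum>i\<in>I. Adot k (edge_dir X i) * AX Y i c)"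
    unfolding Adot_def by (simp add: sum_distrib_left sum_distrib_right mult.assoc sum.swap[of _ I])
  finally show ?thesis .
qed

lemma AX_diff_expansion:
  assumes tb: "tight_basis I X" and Y: "Y \<in> carrier_mat n (Suc m)" and c: "c < Suc m"
  shows "AX Y k c - AX X k c = (\<Sum>i\<in>I. Adot k (edge_dir X i) * slack Y i c)"
proof -
  have "AX X k c = (\<Sum>i\<in>I. Adot k (edge_dir X i) * AX X i c)"
    by (rule AX_expansion[OF tb tight_basisD(4)[OF tb] c])
  also have "\<dots> = (\<Sum>i\<in>I. Adot k (edge_dir X i) * bt i c)"
    using tight_basis_AX[OF tb _ c] by simp
  finally show ?thesis
    unfolding AX_expansion[OF tb Y c, of k] slack_def by (simp add: sum_subtractf right_diff_distrib)
qed

lemma sum_slack_expansion: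
  assumes tbI: "tight_basis I X" and tbJ: "tight_basis J Y" and c: "c < Suc m"
  shows "(\<Sum>i\<in>I. (\<Sum>j\<in>J. Adot j (edge_dir X i)) * slack Y i c) = - (\<Sum>j\<in>J. slack X j c)"
proof -
  have "(\<Sum>i\<in>I. (\<Sum>j\<in>J. Adot j (edge_dir X i)) * slack Y i c) = (\<Sum>j\<in>J. AX Y j c - AX X j c)"
    using AX_diff_expansion[OF tbI tight_basisD(4)[OF tbJ] c]
    by (simp add: sum_distrib_right sum.swap[of _ I])
  also have "\<dots> = - (\<Sum>j\<in>J. slack X j c)"
    using tight_basis_AX[OF tbJ _ c] unfolding slack_def by (simp add: sum_subtractf sum_negf)
  finally show ?thesis .
qed

lemma lex_basis_slack_zero_imp_mem:
  assumes "lex_basis I X" and "j < m" and "\<forall>c<Suc m. slack X j c = 0"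
  shows "j \<in> I"
proof (rule ccontr)
  assume "j \<notin> I"
  then have "slack X j (Suc j) = 1"
    using slack_nonbasic_col[OF conjunct1[OF assms(1)[unfolded lex_basis_def]] assms(2) \<open>j \<notin> I\<close>]
    by simp
  then show False using assms(2,3) by simp
qed

text \<open>Otherwise \<Sum>_{j \<in> J} (A_j X^I - btilde_j) would be both lex-nonnegative and
  lex-nonpositive, forcing every row j \<in> J to be tight at X^I and hence J \<subseteq> I.\<close>
lemma lex_basis_improving_edge:
  assumes lbI: "lex_basis I X" and lbJ: "lex_basis J Y" and ne: "I \<noteq> J"
  shows "\<exists>i\<in>I. (\<Sum>j\<in>J. Adot j (edge_dir X i)) < 0"
proof (rule ccontr)
  define \<gamma> where "\<gamma> i = (\<Sum>j\<in>J. Adot j (edge_dir X i))" for i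
  assume "\<not> ?thesis"
  then have \<gamma>_nonneg: "\<gamma> i \<ge> 0" if "i \<in> I" for i using that unfolding \<gamma>_def by (simp add: not_less)
  have tbI: "tight_basis I X" and tbJ: "tight_basis J Y" using lbI lbJ unfolding lex_basis_def by auto
  note I = tight_basisD[OF tbI] and J = tight_basisD[OF tbJ]
  have "lex_nonneg (Suc m) (\<lambda>c. \<gamma> i * slack Y i c)" if i: "i \<in> I" for i
  proof -
    have "i < m" using i I(1) by auto
    then show ?thesis using lex_nonneg_mult[OF lex_basis_slack[OF lbJ] \<gamma>_nonneg[OF i]] by simp
  qed
  then have "lex_nonneg (Suc m) (\<lambda>c. \<Sum>i\<in>I. \<gamma> i * slack Y i c)"
    by (intro lex_nonneg_sum[OF I(3)])
  then have "lex_nonneg (Suc m) (\<lambda>c. - (\<Sum>j\<in>J. slack X j c))"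
    by (rule lex_nonneg_cong) (simp add: \<gamma>_def sum_slack_expansion[OF tbI tbJ])
  moreover have slack_X: "lex_nonneg (Suc m) (slack X j)" if "j \<in> J" for j
    using lex_basis_slack[OF lbI] that J(1) by blast
  then have "lex_nonneg (Suc m) (\<lambda>c. \<Sum>j\<in>J. slack X j c)"
    by (intro lex_nonneg_sum[OF J(3)])
  ultimately have sum_zero: "\<forall>c<Suc m. (\<Sum>j\<in>J. slack X j c) = 0"
    using lex_nonneg_antisym by blast
  have "J \<subseteq> I"
  proof
    fix j assume j: "j \<in> J"
    then have "\<forall>c<Suc m. slack X j c = 0"
      using lex_nonneg_sum_eq_0_imp[OF J(3), where N = "Suc m" and F = "slack X"] slack_X sum_zero
      by blast
    then show "j \<in> I" using lex_basis_slack_zero_imp_mem[OF lbI] j J(1) by blast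
  qed
  then have "J = I" using card_subset_eq[OF I(3)] I(2) J(2) by simp
  then show False using ne by simp
qed

lemma ratio_lex_pos:
  assumes lb: "lex_basis I X" and j: "j < m" "j \<notin> I" and dj: "Adot j d < 0"
  shows "lex_pos (Suc m) (ratio X d j)"
proof -
  have "slack X j (Suc j) = 1"
    using slack_nonbasic_col[OF conjunct1[OF lb[unfolded lex_basis_def]] j] by simp
  then have "\<not> (\<forall>c<Suc m. slack X j c = 0)" using j(1) by auto
  then have "lex_pos (Suc m) (slack X j)" using lex_basis_slack[OF lb j(1)] unfolding lex_nonneg_def by blast
  then have "lex_pos (Suc m) (\<lambda>c. (1 / - Adot j d) * slack X j c)" by (rule lex_pos_mult) (use dj in simp)
  then show ?thesis unfolding ratio_def by simp
qed

lemma ratio_test_tight: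
  assumes tb: "tight_basis I X" and i: "i \<in> I" and dj: "Adot j (edge_dir X i) < 0"
  shows "tight (insert j (I - {i})) (pivot X (edge_dir X i) (ratio X (edge_dir X i) j))"
  unfolding tight_def
proof (intro ballI allI impI)
  fix k c assume k: "k \<in> insert j (I - {i})" and c: "c < Suc m"
  show "slack (pivot X (edge_dir X i) (ratio X (edge_dir X i) j)) k c = 0"
  proof (cases "k = j")
    case True
    have "Adot j (edge_dir X i) \<noteq> 0" using dj by simp
    then show ?thesis using True by (simp add: slack_pivot[OF c] ratio_def)
  next
    case False
    then have "k \<in> I" "k \<noteq> i" using k by auto
    then show ?thesis
      using tight_basis_Adot_edge_dir[OF tb _ i] tight_basis_slack[OF tb _ c] by (simp add: slack_pivot[OF c])
  qed
qed

text \<open>Choosing j lexicographically minimal in the ratio test keeps every row lex-feasible.\<close>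
lemma ratio_test_lex_feasible:
  assumes lb: "lex_basis I X" and \<theta>: "lex_nonneg (Suc m) (ratio X d j)"
    and min: "\<And>k. k < m \<Longrightarrow> Adot k d < 0 \<Longrightarrow> lex_nonneg (Suc m) (\<lambda>c. ratio X d k c - ratio X d j c)"
  shows "lex_feasible (pivot X d (ratio X d j))"
  unfolding lex_feasible_def
proof (intro allI impI)
  fix k assume k: "k < m"
  show "lex_nonneg (Suc m) (slack (pivot X d (ratio X d j)) k)"
  proof (cases "Adot k d \<ge> 0")
    case True
    then have "lex_nonneg (Suc m) (\<lambda>c. slack X k c + Adot k d * ratio X d j c)"
      using lex_nonneg_add[OF lex_basis_slack[OF lb k] lex_nonneg_mult[OF \<theta> True]] by simp
    then show ?thesis by (rule lex_nonneg_cong) (simp add: slack_pivot)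
  next
    case False
    then have "lex_nonneg (Suc m) (\<lambda>c. (- Adot k d) * (ratio X d k c - ratio X d j c))"
      using min[OF k] by (intro lex_nonneg_mult) auto
    then show ?thesis
      by (rule lex_nonneg_cong) (use False in \<open>simp add: slack_pivot ratio_def field_simps\<close>)
  qed
qed

lemma ratio_test_pivot:
  assumes lb: "lex_basis I X" and i: "i \<in> I" and j: "j < m" "Adot j (edge_dir X i) < 0"
    and min: "\<And>k. k < m \<Longrightarrow> Adot k (edge_dir X i) < 0 \<Longrightarrow>
      lex_nonneg (Suc m) (\<lambda>c. ratio X (edge_dir X i) k c - ratio X (edge_dir X i) j c)"
  shows "j \<notin> I" and "lex_pos (Suc m) (ratio X (edge_dir X i) j)"
    and "lex_basis (insert j (I - {i})) (pivot X (edge_dir X i) (ratio X (edge_dir X i) j))"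
proof -
  have tb: "tight_basis I X" using lb unfolding lex_basis_def by simp
  note I = tight_basisD[OF tb]
  show jI: "j \<notin> I"
  proof
    assume "j \<in> I"
    then have "Adot j (edge_dir X i) \<ge> 0" using tight_basis_Adot_edge_dir[OF tb _ i] by simp
    then show False using j(2) by simp
  qed
  show pos: "lex_pos (Suc m) (ratio X (edge_dir X i) j)" by (rule ratio_lex_pos[OF lb j(1) jI j(2)])
  have "n > 0" using I(2,3) i card_gt_0_iff by blast
  then have "card (insert j (I - {i})) = n" using I(2,3) i jI by (simp add: card_insert_if)
  then show "lex_basis (insert j (I - {i})) (pivot X (edge_dir X i) (ratio X (edge_dir X i) j))"
    using ratio_test_tight[OF tb i j(2)] ratio_test_lex_feasible[OF lb lex_pos_imp_lex_nonneg[OF pos] min]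
      I(1) j(1) pivot_carrier
    unfolding lex_basis_def tight_basis_def by auto
qed

lemma ratio_test:
  assumes poly: "is_polytope (polyhedron A b)" and lb: "lex_basis I X" and i: "i \<in> I"
  obtains j where "j < m" "j \<notin> I" "lex_pos (Suc m) (ratio X (edge_dir X i) j)"
    "lex_basis (insert j (I - {i})) (pivot X (edge_dir X i) (ratio X (edge_dir X i) j))"
proof -
  define d where "d = edge_dir X i"
  define entering where "entering = {k. k < m \<and> Adot k d < 0}"
  have tb: "tight_basis I X" using lb unfolding lex_basis_def by simp
  have "entering \<noteq> {}"
  proof
    assume "entering = {}"
    then have "Adot k d \<ge> 0" if "k < m" for k using that unfolding entering_def by auto
    then have "d r = 0" if "r < n" for r
      using polytope_recession_trivial[OF poly _ _ that] lb unfolding lex_basis_def by blast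
    then have "Adot i d = 0" unfolding Adot_def by simp
    then show False using tight_basis_Adot_edge_dir[OF tb i i] unfolding d_def by simp
  qed
  moreover have "finite entering" unfolding entering_def by simp
  ultimately obtain j where j: "j \<in> entering"
    and min: "\<forall>k\<in>entering. lex_nonneg (Suc m) (\<lambda>c. ratio X d k c - ratio X d j c)"
    using ex_lex_min[of entering "Suc m" "ratio X d"] by blast
  have j': "j < m" "Adot j (edge_dir X i) < 0" using j unfolding entering_def d_def by auto
  have "lex_nonneg (Suc m) (\<lambda>c. ratio X (edge_dir X i) k c - ratio X (edge_dir X i) j c)"
    if "k < m" "Adot k (edge_dir X i) < 0" for k
    using min that unfolding entering_def d_def by blast
  then show ?thesis using that[OF j'(1) ratio_test_pivot[OF lb i j']] by blast
qed

text \<open>The lexicographic objective \<Sum>_{j \<in> J} A_j X^I, minimised exactly at I = J.\<close>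
definition lex_cost :: "nat set \<Rightarrow> nat set \<Rightarrow> nat \<Rightarrow> real" where
  "lex_cost J I c = (\<Sum>j\<in>J. AX (basis_sol A b I) j c)"

lemma improving_lex_neighbour:
  assumes poly: "is_polytope (polyhedron A b)"
    and lfI: "lex_feasible_basis A b I" and lfJ: "lex_feasible_basis A b J" and ne: "I \<noteq> J"
  obtains I' where "(I, I') \<in> lex_edges A b" "lex_pos (Suc m) (\<lambda>c. lex_cost J I c - lex_cost J I' c)"
proof -
  define X where "X = basis_sol A b I"
  have lb: "lex_basis I X" unfolding X_def by (rule lex_feasible_basis_imp_lex_basis[OF lfI])
  note I = tight_basisD[OF conjunct1[OF lb[unfolded lex_basis_def]]]
  obtain i where i: "i \<in> I" and \<gamma>: "(\<Sum>j\<in>J. Adot j (edge_dir X i)) < 0"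
    using lex_basis_improving_edge[OF lb lex_feasible_basis_imp_lex_basis[OF lfJ] ne] by blast
  define d where "d = edge_dir X i"
  obtain j where j: "j < m" "j \<notin> I" and \<theta>: "lex_pos (Suc m) (ratio X d j)"
    and lb': "lex_basis (insert j (I - {i})) (pivot X d (ratio X d j))"
    by (rule ratio_test[OF poly lb i, folded d_def])
  define I' where "I' = insert j (I - {i})"
  have sol': "basis_sol A b I' = pivot X d (ratio X d j)"
    using lb' unfolding I'_def lex_basis_def by (simp add: basis_sol_eq)
  have "I \<inter> I' = I - {i}" unfolding I'_def using j(2) by auto
  moreover have "n > 0" using i I(2,3) card_gt_0_iff by blast
  ultimately have "int (card (I \<inter> I')) = int n - 1" using i I(2,3) by (simp add: of_nat_diff)
  then have edge: "(I, I') \<in> lex_edges A b"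
    using lfI lex_basis_imp_lex_feasible_basis[OF lb'] unfolding I'_def lex_edges_def lex_vertices_def by simp
  have cost: "lex_cost J I c - lex_cost J I' c = (- (\<Sum>j\<in>J. Adot j d)) * ratio X d j c"
    if c: "c < Suc m" for c
    using slack_pivot[OF c, of X d] unfolding lex_cost_def sol' X_def[symmetric] slack_def
    by (simp add: sum.distrib sum_distrib_right)
  have "lex_pos (Suc m) (\<lambda>c. (- (\<Sum>j\<in>J. Adot j d)) * ratio X d j c)"
    by (rule lex_pos_mult[OF \<theta>]) (use \<gamma> in \<open>simp add: d_def\<close>)
  then have "lex_pos (Suc m) (\<lambda>c. lex_cost J I c - lex_cost J I' c)"
    by (rule lex_pos_cong) (simp add: cost)
  with edge show ?thesis by (rule that)
qed

lemma finite_lex_vertices: "finite (lex_vertices A b)"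
proof (rule finite_subset)
  show "lex_vertices A b \<subseteq> Pow {..<m}"
    unfolding lex_vertices_def lex_feasible_basis_def by auto
qed simp

lemma lex_graph_connected:
  assumes poly: "is_polytope (polyhedron A b)"
    and S: "S \<subseteq> lex_vertices A b" "S \<noteq> {}"
    and closed: "\<And>I I'. I \<in> S \<Longrightarrow> (I, I') \<in> lex_edges A b \<Longrightarrow> I' \<in> S"
  shows "lex_vertices A b \<subseteq> S"
proof
  fix J assume J: "J \<in> lex_vertices A b"
  have "finite S" using S(1) finite_lex_vertices by (rule finite_subset)
  then obtain I where I: "I \<in> S"
    and min: "\<forall>K\<in>S. lex_nonneg (Suc m) (\<lambda>c. lex_cost J K c - lex_cost J I c)"
    using ex_lex_min[OF _ S(2), of "Suc m" "lex_cost J"] by blast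
  show "J \<in> S"
  proof (rule ccontr)
    assume "J \<notin> S"
    then have "I \<noteq> J" using I by auto
    moreover have lfI: "lex_feasible_basis A b I" and lfJ: "lex_feasible_basis A b J"
      using I S(1) J unfolding lex_vertices_def by auto
    ultimately obtain I' where edge: "(I, I') \<in> lex_edges A b"
      and pos: "lex_pos (Suc m) (\<lambda>c. lex_cost J I c - lex_cost J I' c)"
      using improving_lex_neighbour[OF poly lfI lfJ] by blast
    have "lex_nonneg (Suc m) (\<lambda>c. lex_cost J I' c - lex_cost J I c)" using min closed[OF I edge] by blast
    then have "lex_nonneg (Suc m) (\<lambda>c. - (lex_cost J I c - lex_cost J I' c))"
      by (rule lex_nonneg_cong) simp
    with lex_pos_imp_lex_nonneg[OF pos]
    have "\<forall>c<Suc m. lex_cost J I c - lex_cost J I' c = 0" by (rule lex_nonneg_antisym)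
    then show False using pos unfolding lex_pos_def by auto
  qed
qed

end

section \<open>The isomorphism\<close>

lemma graph_iso_onto_connected:
  fixes f :: "'v \<Rightarrow> 'w"
  assumes inj: "inj_on f V" and EV: "E \<subseteq> V \<times> V" and V: "V \<noteq> {}" and fV: "f ` V \<subseteq> W"
    and hom: "\<And>u v. (u, v) \<in> E \<Longrightarrow> (f u, f v) \<in> F"
    and finite_nbrs: "\<And>w. w \<in> W \<Longrightarrow> finite {w'. (w, w') \<in> F}"
    and degree: "\<And>u. u \<in> V \<Longrightarrow> card {w'. (f u, w') \<in> F} \<le> card {v. (u, v) \<in> E}"
    and connected: "\<And>S. S \<subseteq> W \<Longrightarrow> S \<noteq> {} \<Longrightarrow> (\<And>w w'. w \<in> S \<Longrightarrow> (w, w') \<in> F \<Longrightarrow> w' \<in> S) \<Longrightarrow> W \<subseteq> S"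
  shows "graph_iso f V E W F"
proof -
  have nbrs: "{w'. (f u, w') \<in> F} = f ` {v. (u, v) \<in> E}" if u: "u \<in> V" for u
  proof -
    let ?N = "{v. (u, v) \<in> E}"
    have fin: "finite {w'. (f u, w') \<in> F}" using finite_nbrs fV u by blast
    have sub: "f ` ?N \<subseteq> {w'. (f u, w') \<in> F}" using hom by blast
    have "card (f ` ?N) = card ?N" using inj EV by (intro card_image inj_on_subset[OF inj]) blast
    then have "card {w'. (f u, w') \<in> F} \<le> card (f ` ?N)" using degree[OF u] by simp
    then show ?thesis using card_seteq[OF fin sub] by simp
  qed
  have onto: "W \<subseteq> f ` V"
  proof (rule connected)
    show "f ` V \<noteq> {}" using V by simp
    fix w w' assume "w \<in> f ` V" and ww': "(w, w') \<in> F"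
    then obtain u where u: "u \<in> V" "w = f u" by blast
    then have "w' \<in> {w'. (f u, w') \<in> F}" using ww' by simp
    then have "w' \<in> f ` {v. (u, v) \<in> E}" unfolding nbrs[OF u(1)] .
    then show "w' \<in> f ` V" using EV by blast
  qed (use fV in simp)
  have "(u, v) \<in> E" if u: "u \<in> V" and v: "v \<in> V" and uv: "(f u, f v) \<in> F" for u v
  proof -
    have "f v \<in> {w'. (f u, w') \<in> F}" using uv by simp
    then have "f v \<in> f ` {v. (u, v) \<in> E}" unfolding nbrs[OF u] .
    then obtain v' where "f v = f v'" and v': "(u, v') \<in> E" by (rule imageE) simp
    then have "v' = v" using inj_onD[OF inj] v EV by blast
    then show ?thesis using v' by simp
  qed
  then have "\<forall>u\<in>V. \<forall>v\<in>V. (u, v) \<in> E \<longleftrightarrow> (f u, f v) \<in> F" using hom by blast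
  moreover have "bij_betw f V W" unfolding bij_betw_def using inj fV onto by blast
  ultimately show ?thesis unfolding graph_iso_def by blast
qed

theorem mainTheorem6:
  fixes A :: "real mat" and b :: "real vec" and m n :: nat
    and V :: "(nat set \<times> real mat) set"
    and E :: "((nat set \<times> real mat) \<times> (nat set \<times> real mat)) set"
  assumes A: "A \<in> carrier_mat m n" and b: "b \<in> carrier_vec m"
    and poly: "is_polytope (polyhedron A b)"
    and graph: "fin_undirected_graph V E"
    and nonempty: "V \<noteq> {}"
    and vert: "\<And>I X. (I, X) \<in> V \<Longrightarrow> I \<subseteq> {..<m} \<and> X \<in> carrier_mat n (1 + m)"
    and card_I: "\<And>I X. (I, X) \<in> V \<Longrightarrow> card I = n"
    and eq_I: "\<And>I X. (I, X) \<in> V \<Longrightarrow> rows_sub A I * X = rows_sub (btilde b) I"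
    and lex: "\<And>I X. (I, X) \<in> V \<Longrightarrow> mat_lex_ge (A * X) (btilde b)"
    and deg: "\<And>u. u \<in> V \<Longrightarrow> card {u'. (u, u') \<in> E} = n"
    and adj: "\<And>I X I' X'. ((I, X), (I', X')) \<in> E \<Longrightarrow> int (card (I \<inter> I')) = int n - 1"
  shows "graph_iso fst V E (lex_vertices A b) (lex_edges A b)"
proof -
  interpret lex_system A b m n by unfold_locales (fact A b)+
  have vertex: "fst u \<in> lex_vertices A b" "basis_sol A b (fst u) = snd u" if "u \<in> V" for u
  proof -
    obtain I X where u: "u = (I, X)" by (cases u)
    then have IX: "(I, X) \<in> V" using that by simp
    show "fst u \<in> lex_vertices A b" "basis_sol A b (fst u) = snd u"
      using lex_vertex_if_lex_feasible_solution[OF conjunct1[OF vert[OF IX]] card_I[OF IX]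
          conjunct2[OF vert[OF IX], simplified] eq_I[OF IX] lex[OF IX]] u
      by simp_all
  qed
  have EV: "E \<subseteq> V \<times> V" using graph unfolding fin_undirected_graph_def by simp
  show ?thesis
  proof (rule graph_iso_onto_connected[OF _ EV nonempty])
    show "inj_on fst V" by (rule inj_onI) (metis vertex(2) prod.expand)
    show "fst ` V \<subseteq> lex_vertices A b" using vertex(1) by blast
    show "(fst u, fst v) \<in> lex_edges A b" if uv: "(u, v) \<in> E" for u v
    proof -
      have "u \<in> V" "v \<in> V" using uv EV by auto
      then show ?thesis using adj[of "fst u" "snd u" "fst v" "snd v"] uv vertex(1)
        unfolding lex_edges_def by auto
    qed
    show "finite {I'. (I, I') \<in> lex_edges A b}" for I
      by (rule finite_subset[OF _ finite_lex_vertices]) (auto simp: lex_edges_def)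
    show "card {I'. (fst u, I') \<in> lex_edges A b} \<le> card {v. (u, v) \<in> E}" if "u \<in> V" for u
      using card_lex_neighbours_le vertex(1)[OF that] deg[OF that] unfolding lex_vertices_def by simp
    show "lex_vertices A b \<subseteq> S" if "S \<subseteq> lex_vertices A b" "S \<noteq> {}"
      "\<And>I I'. I \<in> S \<Longrightarrow> (I, I') \<in> lex_edges A b \<Longrightarrow> I' \<in> S" for S
      using lex_graph_connected[OF poly that] .
  qed
qed

end
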